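(* Let $x,y\in\mathbb{H}^2$ and $d=d\big(\tfrac{x+y}{2},\partial\mathbb{H}^2\big)$. Then $$\tilde\tau_{\mathbb{H}^2}(x,y)\ge\begin{cases}\log\Big(1+\sqrt{\frac{|x-y|}{d}}\Big), & |x-y|>2d,\\[1mm] \log\Big(1+\frac{2|x-y|}{\sqrt{4d^2+|x-y|^2}}\Big), & |x-y|\le 2d,\end{cases}$$ and, if $|x-y|<2d$, $$\tilde\tau_{\mathbb{H}^2}(x,y)\le\log\Big(1+\frac{2|x-y|}{\sqrt{4d^2-|x-y|^2}}\Big).$$
   Context: $\mathbb{H}^2=\{(x_1,x_2)\in\mathbb{R}^2:x_2>0\}$, $\partial\mathbb{H}^2$ is the real axis, $d(z,\partial\mathbb{H}^2)$ is Euclidean distance. For a proper subdomain $D\subsetneq\mathbb{R}^n$ and $x,y\in D$, $\tilde\tau_D(x,y)=\log\big(1+\sup_{p\in\partial D}\frac{|x-y|}{\sqrt{|x-p||y-p|}}\big)$ (the scale invariant Cassinian metric). *)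

theory Defs
  imports "HOL-Analysis.Analysis"
begin

definition H2 :: "complex set" where
  "H2 = {z. Im z > 0}"

definition scale_inv_cassinian :: "'a::euclidean_space set \<Rightarrow> 'a \<Rightarrow> 'a \<Rightarrow> real" where
  "scale_inv_cassinian D x y =
     ln (1 + (SUP p\<in>frontier D. norm (x - y) / sqrt (norm (x - p) * norm (y - p))))"

end

theory Submission
  imports Defs
begin

text \<open>Write \<open>m = (x + y)/2\<close> and \<open>w = (x - y)/2\<close>. For a boundary point \<open>p\<close> of the
  half-plane, \<open>|x - p| |y - p| = |(m - p)\<^sup>2 - w\<^sup>2|\<close>, and \<open>d = Im m\<close>. Since
  \<open>|m - p| \<ge> d\<close>, the product is at least \<open>d\<^sup>2 - |w|\<^sup>2\<close>, giving the upper bound; at the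
  foot \<open>p = Re m\<close> it is at most \<open>d\<^sup>2 + |w|\<^sup>2\<close>, giving the first lower bound. When
  \<open>|w| > d\<close>, moving \<open>p\<close> from the foot by \<open>\<plusminus>sqrt (|w|\<^sup>2 - d\<^sup>2)\<close>, with the sign chosen
  against \<open>Re w Im w\<close>, makes the product at most \<open>2 |w| d = |x - y| d\<close>, giving the
  second lower bound.\<close>

lemma frontier_H2: "frontier H2 = {z. Im z = 0}"
proof -
  have "H2 = {z. \<i> \<bullet> z > 0}" by (simp add: H2_def inner_complex_def)
  moreover have "frontier {z::complex. \<i> \<bullet> z > 0} = {z. \<i> \<bullet> z = 0}"
    by (rule frontier_halfspace_gt) simp
  ultimately show ?thesis by (simp add: inner_complex_def)
qed

lemma infdist_frontier_H2:
  assumes "z \<in> H2"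
  shows "infdist z (frontier H2) = Im z"
proof (rule antisym)
  have "dist z (of_real (Re z)) = Im z"
    using assms by (simp add: H2_def dist_norm cmod_def)
  then show "infdist z (frontier H2) \<le> Im z"
    by (metis infdist_le frontier_H2 Im_complex_of_real mem_Collect_eq)
next
  have "Im z \<le> dist z p" if "p \<in> frontier H2" for p
    using that abs_Im_le_cmod[of "z - p"] by (simp add: frontier_H2 dist_norm)
  moreover have "frontier H2 \<noteq> {}"
    using frontier_H2 by (metis Im_complex_of_real mem_Collect_eq empty_iff)
  ultimately show "Im z \<le> infdist z (frontier H2)"
    by (simp add: infdist_notempty cINF_greatest)
qed

lemma norm_diff_mult_norm_diff:
  fixes x y p :: complex
  shows "norm (x - p) * norm (y - p) = norm (((x + y) / 2 - p)\<^sup>2 - ((x - y) / 2)\<^sup>2)"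
proof -
  have "(x - p) * (y - p) = ((x + y) / 2 - p)\<^sup>2 - ((x - y) / 2)\<^sup>2"
    by (simp add: field_simps power2_eq_square)
  then show ?thesis by (metis norm_mult)
qed


lemma norm_sq_diff_ge:
  fixes m w :: complex
  assumes "Im p = 0"
  shows "(Im m)\<^sup>2 - (norm w)\<^sup>2 \<le> norm ((m - p)\<^sup>2 - w\<^sup>2)"
proof -
  have "\<bar>Im m\<bar> \<le> norm (m - p)"
    using assms abs_Im_le_cmod[of "m - p"] by simp
  then have "(Im m)\<^sup>2 \<le> (norm (m - p))\<^sup>2"
    by (metis abs_ge_zero power2_abs power_mono)
  moreover have "(norm (m - p))\<^sup>2 - (norm w)\<^sup>2 \<le> norm ((m - p)\<^sup>2 - w\<^sup>2)"
    by (metis norm_triangle_ineq2 norm_power)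
  ultimately show ?thesis by linarith
qed

lemma norm_sq_diff_at_foot_le:
  fixes m w :: complex
  shows "norm ((m - of_real (Re m))\<^sup>2 - w\<^sup>2) \<le> (Im m)\<^sup>2 + (norm w)\<^sup>2"
proof -
  have "(m - of_real (Re m))\<^sup>2 = - of_real ((Im m)\<^sup>2)"
    by (simp add: complex_eq_iff power2_eq_square)
  then show ?thesis
    using norm_triangle_ineq4[of "- of_real ((Im m)\<^sup>2)" "w\<^sup>2"] by (simp add: norm_power)
qed

lemma sum_squares_witness:
  fixes a b d :: real
  assumes "\<bar>b\<bar> < d" and "d\<^sup>2 < a\<^sup>2 + b\<^sup>2"
  shows "\<exists>r. (r\<^sup>2 - d\<^sup>2 - a\<^sup>2 + b\<^sup>2)\<^sup>2 + (2 * d * r + 2 * a * b)\<^sup>2 \<le> 4 * (a\<^sup>2 + b\<^sup>2) * d\<^sup>2"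
proof -
  define Q where "Q = sqrt (a\<^sup>2 + b\<^sup>2 - d\<^sup>2)"
  define r where "r = (if a * b \<ge> 0 then - Q else Q)"
  have Q_nonneg: "Q \<ge> 0" and Q_sq: "Q\<^sup>2 = a\<^sup>2 + b\<^sup>2 - d\<^sup>2"
    using assms(2) by (auto simp: Q_def)
  have r_sq: "r\<^sup>2 = Q\<^sup>2" and r_ab: "r * (a * b) = - Q * \<bar>a * b\<bar>"
    by (auto simp: r_def)
  have "b\<^sup>2 < d\<^sup>2"
    using assms(1) by (metis abs_ge_zero power2_abs power_strict_mono zero_less_numeral)
  then have "Q\<^sup>2 \<le> \<bar>a\<bar>\<^sup>2" using Q_sq by simp
  then have Q_le: "Q \<le> \<bar>a\<bar>" by (meson abs_ge_zero power2_le_imp_le)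
  have "\<bar>b\<bar> * Q * (\<bar>b\<bar> * Q) \<le> d * Q * (\<bar>b\<bar> * \<bar>a\<bar>)"
    using assms(1) Q_le Q_nonneg by (intro mult_mono) auto
  then have "b\<^sup>2 * Q\<^sup>2 \<le> d * Q * \<bar>a * b\<bar>"
    by (simp add: power2_eq_square abs_mult algebra_simps)
  moreover have "0 \<le> d * Q * \<bar>a * b\<bar>"
    using assms(1) Q_nonneg by simp
  moreover have "b\<^sup>2 * (r\<^sup>2 - d\<^sup>2) + 2 * d * (r * (a * b))
      = b\<^sup>2 * Q\<^sup>2 - b\<^sup>2 * d\<^sup>2 - 2 * (d * Q * \<bar>a * b\<bar>)"
    unfolding r_sq r_ab by (simp add: algebra_simps)
  moreover have "0 \<le> b\<^sup>2 * d\<^sup>2" by simp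
  ultimately have excess_nonpos: "b\<^sup>2 * (r\<^sup>2 - d\<^sup>2) + 2 * d * (r * (a * b)) \<le> 0"
    by linarith
  have "(r\<^sup>2 - d\<^sup>2 - a\<^sup>2 + b\<^sup>2)\<^sup>2 + (2 * d * r + 2 * a * b)\<^sup>2
      = 4 * (a\<^sup>2 + b\<^sup>2) * d\<^sup>2 + 4 * (b\<^sup>2 * (r\<^sup>2 - d\<^sup>2) + 2 * d * (r * (a * b)))"
    using r_sq Q_sq by algebra
  also have "\<dots> \<le> 4 * (a\<^sup>2 + b\<^sup>2) * d\<^sup>2"
    using excess_nonpos by simp
  finally show ?thesis ..
qed

lemma exists_real_norm_sq_diff_le:
  fixes m w :: complex
  assumes "\<bar>Im w\<bar> < Im m" and "Im m < norm w"
  shows "\<exists>p. Im p = 0 \<and> norm ((m - p)\<^sup>2 - w\<^sup>2) \<le> 2 * norm w * Im m"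
proof -
  have "(Im m)\<^sup>2 < (norm w)\<^sup>2"
    using assms by (intro power_strict_mono) auto
  then have "(Im m)\<^sup>2 < (Re w)\<^sup>2 + (Im w)\<^sup>2" by (simp add: cmod_power2)
  then obtain r where r: "(r\<^sup>2 - (Im m)\<^sup>2 - (Re w)\<^sup>2 + (Im w)\<^sup>2)\<^sup>2 + (2 * Im m * r + 2 * Re w * Im w)\<^sup>2
      \<le> 4 * ((Re w)\<^sup>2 + (Im w)\<^sup>2) * (Im m)\<^sup>2"
    using sum_squares_witness assms(1) by blast
  define p where "p = complex_of_real (Re m + r)"
  have "Re ((m - p)\<^sup>2 - w\<^sup>2) = r\<^sup>2 - (Im m)\<^sup>2 - (Re w)\<^sup>2 + (Im w)\<^sup>2"
    and "(Im ((m - p)\<^sup>2 - w\<^sup>2))\<^sup>2 = (2 * Im m * r + 2 * Re w * Im w)\<^sup>2"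
    by (simp_all add: p_def power2_eq_square algebra_simps)
  then have "norm ((m - p)\<^sup>2 - w\<^sup>2) \<le> sqrt (4 * (norm w)\<^sup>2 * (Im m)\<^sup>2)"
    using r by (simp add: cmod_def cmod_power2)
  also have "\<dots> = 2 * norm w * Im m"
    using assms by (simp add: real_sqrt_mult)
  finally show ?thesis
    by (intro exI[of _ p]) (simp add: p_def)
qed


lemma norm_diff_mult_norm_diff_pos:
  assumes "x \<in> H2" and "y \<in> H2" and "Im p = 0"
  shows "0 < norm (x - p) * norm (y - p)"
  using assms by (auto simp: H2_def complex_eq_iff)

lemma scale_inv_cassinian_H2_ge:
  assumes "x \<in> H2" and "y \<in> H2" and "Im p = 0"
    and "norm (x - p) * norm (y - p) \<le> B"
  shows "ln (1 + norm (x - y) / sqrt B) \<le> scale_inv_cassinian H2 x y"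
proof -
  define g where "g q = norm (x - y) / sqrt (norm (x - q) * norm (y - q))" for q
  have "g q \<le> norm (x - y) / sqrt (Im x * Im y)" if "q \<in> frontier H2" for q
  proof -
    have "Im x \<le> norm (x - q)" "Im y \<le> norm (y - q)"
      using that abs_Im_le_cmod[of "x - q"] abs_Im_le_cmod[of "y - q"] by (auto simp: frontier_H2)
    then have "Im x * Im y \<le> norm (x - q) * norm (y - q)"
      using assms(1,2) by (intro mult_mono) (auto simp: H2_def)
    moreover have "0 < Im x * Im y"
      using assms(1,2) by (simp add: H2_def)
    ultimately show ?thesis
      unfolding g_def by (intro divide_left_mono) auto
  qed
  then have "bdd_above (g ` frontier H2)" by (intro bdd_aboveI2)
  have "norm (x - y) / sqrt B \<le> g p"
    using assms norm_diff_mult_norm_diff_pos[OF assms(1-3)] unfolding g_def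
    by (intro divide_left_mono) auto
  also have "\<dots> \<le> (SUP q\<in>frontier H2. g q)"
    using \<open>bdd_above (g ` frontier H2)\<close> assms(3) by (intro cSUP_upper) (auto simp: frontier_H2)
  finally have "norm (x - y) / sqrt B \<le> (SUP q\<in>frontier H2. g q)" .
  moreover have "0 \<le> norm (x - y) / sqrt B"
    using assms(4) norm_diff_mult_norm_diff_pos[OF assms(1-3)] by simp
  ultimately show ?thesis
    unfolding scale_inv_cassinian_def g_def[abs_def] by simp
qed

lemma scale_inv_cassinian_H2_le:
  assumes "0 < B" and "\<And>p. Im p = 0 \<Longrightarrow> B \<le> norm (x - p) * norm (y - p)"
  shows "scale_inv_cassinian H2 x y \<le> ln (1 + norm (x - y) / sqrt B)"
proof -
  define g where "g q = norm (x - y) / sqrt (norm (x - q) * norm (y - q))" for q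
  have g_le: "g q \<le> norm (x - y) / sqrt B" if "q \<in> frontier H2" for q
  proof -
    have "B \<le> norm (x - q) * norm (y - q)"
      using assms(2) that by (simp add: frontier_H2)
    then show ?thesis
      using assms(1) unfolding g_def by (intro divide_left_mono) auto
  qed
  have frontier_nonempty: "0 \<in> frontier H2" by (simp add: frontier_H2)
  have "0 \<le> g 0" by (simp add: g_def)
  also have "\<dots> \<le> (SUP q\<in>frontier H2. g q)"
    using g_le frontier_nonempty by (intro cSUP_upper bdd_aboveI2) auto
  finally have "0 \<le> (SUP q\<in>frontier H2. g q)" .
  moreover have "(SUP q\<in>frontier H2. g q) \<le> norm (x - y) / sqrt B"
    using g_le frontier_nonempty by (intro cSUP_least) auto
  ultimately show ?thesis
    unfolding scale_inv_cassinian_def g_def[abs_def] by simp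
qed

lemma scale_inv_cassinian_H2_ge_midpoint_foot:
  assumes "x \<in> H2" and "y \<in> H2"
  shows "ln (1 + 2 * norm (x - y) / sqrt (4 * (Im ((x + y) / 2))\<^sup>2 + (norm (x - y))\<^sup>2))
    \<le> scale_inv_cassinian H2 x y"
proof -
  define m where "m = (x + y) / 2"
  define B where "B = 4 * (Im m)\<^sup>2 + (norm (x - y))\<^sup>2"
  have "norm (x - of_real (Re m)) * norm (y - of_real (Re m)) \<le> (Im m)\<^sup>2 + (norm ((x - y) / 2))\<^sup>2"
    unfolding norm_diff_mult_norm_diff m_def by (rule norm_sq_diff_at_foot_le)
  also have "\<dots> = B / 4"
    by (simp add: B_def norm_divide power_divide)
  finally have "ln (1 + norm (x - y) / sqrt (B / 4)) \<le> scale_inv_cassinian H2 x y"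
    using assms by (intro scale_inv_cassinian_H2_ge) auto
  then show ?thesis
    by (simp add: B_def m_def real_sqrt_divide mult.commute)
qed

lemma scale_inv_cassinian_H2_ge_sqrt:
  assumes "x \<in> H2" and "y \<in> H2" and far: "2 * Im ((x + y) / 2) < norm (x - y)"
  shows "ln (1 + sqrt (norm (x - y) / Im ((x + y) / 2))) \<le> scale_inv_cassinian H2 x y"
proof -
  define m where "m = (x + y) / 2"
  define w where "w = (x - y) / 2"
  have "\<bar>Im w\<bar> < Im m" and m_pos: "0 < Im m"
    using assms(1,2) by (auto simp: H2_def m_def w_def)
  moreover have "Im m < norm w"
    using far by (simp add: m_def w_def norm_divide)
  ultimately obtain p where "Im p = 0" and "norm ((m - p)\<^sup>2 - w\<^sup>2) \<le> 2 * norm w * Im m"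
    using exists_real_norm_sq_diff_le by blast
  moreover have "2 * norm w = norm (x - y)"
    by (simp add: w_def norm_divide)
  ultimately have "ln (1 + norm (x - y) / sqrt (norm (x - y) * Im m)) \<le> scale_inv_cassinian H2 x y"
    using assms(1,2) by (intro scale_inv_cassinian_H2_ge[of x y p])
      (auto simp: norm_diff_mult_norm_diff m_def w_def)
  moreover have "norm (x - y) / sqrt (norm (x - y) * Im m) = sqrt (norm (x - y) / Im m)"
  proof -
    have "0 < norm (x - y)" using far[folded m_def] m_pos by linarith
    then show ?thesis using m_pos by (simp add: real_sqrt_mult real_sqrt_divide field_simps)
  qed
  ultimately show ?thesis by (simp add: m_def)
qed

lemma scale_inv_cassinian_H2_le_midpoint:
  assumes near: "norm (x - y) < 2 * Im ((x + y) / 2)"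
  shows "scale_inv_cassinian H2 x y
    \<le> ln (1 + 2 * norm (x - y) / sqrt (4 * (Im ((x + y) / 2))\<^sup>2 - (norm (x - y))\<^sup>2))"
proof -
  define m where "m = (x + y) / 2"
  define B where "B = 4 * (Im m)\<^sup>2 - (norm (x - y))\<^sup>2"
  have "(norm (x - y))\<^sup>2 < (2 * Im m)\<^sup>2"
    using near by (intro power_strict_mono) (auto simp: m_def)
  then have "0 < B / 4" by (simp add: B_def power_mult_distrib)
  moreover have "B / 4 \<le> norm (x - p) * norm (y - p)" if "Im p = 0" for p
  proof -
    have "B / 4 = (Im m)\<^sup>2 - (norm ((x - y) / 2))\<^sup>2"
      by (simp add: B_def norm_divide power_divide)
    also have "\<dots> \<le> norm (x - p) * norm (y - p)"
      unfolding norm_diff_mult_norm_diff m_def using that by (rule norm_sq_diff_ge)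
    finally show ?thesis .
  qed
  ultimately have "scale_inv_cassinian H2 x y \<le> ln (1 + norm (x - y) / sqrt (B / 4))"
    by (rule scale_inv_cassinian_H2_le)
  then show ?thesis
    by (simp add: B_def m_def real_sqrt_divide mult.commute)
qed

theorem theorem3p12:
  fixes x y :: complex and d :: real
  assumes "x \<in> H2" and "y \<in> H2"
    and "d = infdist ((x + y) / 2) (frontier H2)"
  shows "scale_inv_cassinian H2 x y \<ge>
           (if norm (x - y) > 2 * d
            then ln (1 + sqrt (norm (x - y) / d))
            else ln (1 + 2 * norm (x - y) / sqrt (4 * d^2 + (norm (x - y))^2)))
         \<and> (norm (x - y) < 2 * d \<longrightarrow>
           scale_inv_cassinian H2 x y \<le> ln (1 + 2 * norm (x - y) / sqrt (4 * d^2 - (norm (x - y))^2)))"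
proof -
  have "(x + y) / 2 \<in> H2"
    using assms(1,2) by (simp add: H2_def)
  then have d_eq: "d = Im ((x + y) / 2)"
    using assms(3) by (simp add: infdist_frontier_H2)
  show ?thesis
    unfolding d_eq
    using scale_inv_cassinian_H2_ge_midpoint_foot[OF assms(1,2)]
      scale_inv_cassinian_H2_ge_sqrt[OF assms(1,2)] scale_inv_cassinian_H2_le_midpoint
    by auto
qed

end
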